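(* Let $\mathbb{K}$ be an algebraically closed field of characteristic $2$, $n\geq2$, $\mathfrak{g}=\mathfrak{vect}^{(1)}(1;\underline{n})$, and let $u\in\mathcal{O}(1;\underline{n})$ be a linear combination of the elements $x^{(2j)}$ with $j\geq1$ (i.e. $u$ has only even divided powers and zero constant term). Then the even part of the Lie superalgebra $S(\mathfrak{g}^{<1>})$ associated with the $\mathbb{Z}/2$-grading of $\mathfrak{g}$ defined by $D_u=(u+x+xu\,\partial^2u)\partial$ is a solvable Lie algebra.
   Context: $\mathcal{O}(1;\underline{n})$ is the divided power algebra with basis $x^{(r)}$, $0\leq r<2^n$, $x^{(r)}x^{(s)}=\binom{r+s}{r}x^{(r+s)}$ (zero if $r+s\geq2^n$), $\partial x^{(k)}=x^{(k-1)}$. $\mathfrak{vect}(1;\underline{n})=\{f\partial\}$ with commutator bracket; $\mathfrak{g}=\mathfrak{vect}^{(1)}(1;\underline{n})$ is its derived algebra. The operator $U:X\mapsto[D_u,X]$ maps $\mathfrak{g}$ to itself with $U^2=U$; the grading it defines is $\mathfrak{g}_{\bar1}=\mathrm{Im}\,U$, $\mathfrak{g}_{\bar0}=\mathrm{Ker}\,U$. For this grading, $\mathfrak{g}^{<1>}$ is the smallest Lie subalgebra of $\mathrm{Der}\,\mathfrak{g}$ containing $\mathrm{ad}\,\mathfrak{g}$ and all $(\mathrm{ad}_y)^2$, $y\in\mathfrak{g}_{\bar1}$; its even part (derivations preserving $\mathfrak{g}_{\bar0}$ and $\mathfrak{g}_{\bar1}$) is the even part of $S(\mathfrak{g}^{<1>})$,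 the Lie superalgebra on $\mathfrak{g}^{<1>}$ with odd part $\mathfrak{g}_{\bar1}$ and squaring $y\mapsto(\mathrm{ad}_y)^2$. *)

theory Defs
  imports "HOL-Computational_Algebra.Polynomial"
begin

text \<open>Divided power algebra O(1;n): an element is represented by its coefficient
  function f, where f r is the coefficient of x^(r); elements of O(1;n) are those
  with f r = 0 for r \<ge> 2^n.  A vector field f\<partial> is represented by f.\<close>

definition dpO :: "nat \<Rightarrow> (nat \<Rightarrow> 'a::field) set" where
  "dpO n = {f. \<forall>r\<ge>2^n. f r = 0}"

definition dp_mult :: "nat \<Rightarrow> (nat \<Rightarrow> 'a::field) \<Rightarrow> (nat \<Rightarrow> 'a) \<Rightarrow> nat \<Rightarrow> 'a" where
  "dp_mult n f g = (\<lambda>k. if k < 2^n then (\<Sum>r\<le>k. of_nat (k choose r) * f r * g (k - r)) else 0)"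

definition dp_deriv :: "nat \<Rightarrow> (nat \<Rightarrow> 'a::field) \<Rightarrow> nat \<Rightarrow> 'a" where
  "dp_deriv n f = (\<lambda>k. if k + 1 < 2^n then f (k + 1) else 0)"

definition dp_x :: "nat \<Rightarrow> 'a::field" where
  "dp_x = (\<lambda>k. if k = 1 then 1 else 0)"

definition vect :: "nat \<Rightarrow> (nat \<Rightarrow> 'a::field) set" where
  "vect n = dpO n"

definition vbr :: "nat \<Rightarrow> (nat \<Rightarrow> 'a::field) \<Rightarrow> (nat \<Rightarrow> 'a) \<Rightarrow> nat \<Rightarrow> 'a" where
  "vbr n f g = (\<lambda>k. dp_mult n f (dp_deriv n g) k - dp_mult n g (dp_deriv n f) k)"

inductive_set lin_span :: "('b \<Rightarrow> 'a::field) set \<Rightarrow> ('b \<Rightarrow> 'a) set" for S where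
  zero: "(\<lambda>_. 0) \<in> lin_span S"
| base: "v \<in> S \<Longrightarrow> v \<in> lin_span S"
| add: "v \<in> lin_span S \<Longrightarrow> w \<in> lin_span S \<Longrightarrow> (\<lambda>k. v k + w k) \<in> lin_span S"
| smult: "v \<in> lin_span S \<Longrightarrow> (\<lambda>k. c * v k) \<in> lin_span S"

definition vect1 :: "nat \<Rightarrow> (nat \<Rightarrow> 'a::field) set" where
  "vect1 n = lin_span {vbr n f g | f g. f \<in> vect n \<and> g \<in> vect n}"

definition D_u :: "nat \<Rightarrow> (nat \<Rightarrow> 'a::field) \<Rightarrow> nat \<Rightarrow> 'a" where
  "D_u n u = (\<lambda>k. u k + dp_x k +
     dp_mult n dp_x (dp_mult n u (dp_deriv n (dp_deriv n u))) k)"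

text \<open>The grading defined by U = ad D_u on g: g_1 = Im U, g_0 = Ker U.\<close>
definition gr_odd :: "nat \<Rightarrow> (nat \<Rightarrow> 'a::field) \<Rightarrow> (nat \<Rightarrow> 'a) set" where
  "gr_odd n u = {vbr n (D_u n u) X | X. X \<in> vect1 n}"

definition gr_even :: "nat \<Rightarrow> (nat \<Rightarrow> 'a::field) \<Rightarrow> (nat \<Rightarrow> 'a) set" where
  "gr_even n u = {X \<in> vect1 n. vbr n (D_u n u) X = (\<lambda>_. 0)}"

text \<open>Endomorphisms of g are represented as maps on coefficient functions that
  vanish outside g (so that equality of functions is equality of endomorphisms).\<close>
type_synonym 'a endo = "(nat \<Rightarrow> 'a) \<Rightarrow> nat \<Rightarrow> 'a"

definition endo_zero :: "'a::field endo" where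
  "endo_zero = (\<lambda>X k. 0)"

definition endo_comp :: "'a::field endo \<Rightarrow> 'a endo \<Rightarrow> 'a endo" where
  "endo_comp D E = (\<lambda>X. D (E X))"

definition endo_br :: "'a::field endo \<Rightarrow> 'a endo \<Rightarrow> 'a endo" where
  "endo_br D E = (\<lambda>X k. D (E X) k - E (D X) k)"

definition Der :: "nat \<Rightarrow> 'a::field endo set" where
  "Der n = {D. (\<forall>X. X \<notin> vect1 n \<longrightarrow> D X = (\<lambda>_. 0))
      \<and> (\<forall>X\<in>vect1 n. D X \<in> vect1 n)
      \<and> (\<forall>X\<in>vect1 n. \<forall>Y\<in>vect1 n. D (\<lambda>k. X k + Y k) = (\<lambda>k. D X k + D Y k))
      \<and> (\<forall>X\<in>vect1 n. \<forall>c. D (\<lambda>k. c * X k) = (\<lambda>k. c * D X k))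
      \<and> (\<forall>X\<in>vect1 n. \<forall>Y\<in>vect1 n.
            D (vbr n X Y) = (\<lambda>k. vbr n (D X) Y k + vbr n X (D Y) k))}"

definition ad_g :: "nat \<Rightarrow> (nat \<Rightarrow> 'a::field) \<Rightarrow> 'a endo" where
  "ad_g n X = (\<lambda>Y. if Y \<in> vect1 n then vbr n X Y else (\<lambda>_. 0))"

definition lie_subalg :: "'a::field endo set \<Rightarrow> bool" where
  "lie_subalg L \<longleftrightarrow> endo_zero \<in> L
     \<and> (\<forall>D\<in>L. \<forall>E\<in>L. (\<lambda>X k. D X k + E X k) \<in> L)
     \<and> (\<forall>D\<in>L. \<forall>c. (\<lambda>X k. c * D X k) \<in> L)
     \<and> (\<forall>D\<in>L. \<forall>E\<in>L. endo_br D E \<in> L)"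

definition g_sq :: "nat \<Rightarrow> (nat \<Rightarrow> 'a::field) \<Rightarrow> 'a endo set" where
  "g_sq n u = \<Inter>{L. L \<subseteq> Der n \<and> lie_subalg L
       \<and> (\<forall>X\<in>vect1 n. ad_g n X \<in> L)
       \<and> (\<forall>y\<in>gr_odd n u. endo_comp (ad_g n y) (ad_g n y) \<in> L)}"

text \<open>Even part of S(g^<1>): the elements of g^<1> preserving g_0 and g_1.\<close>
definition S_even :: "nat \<Rightarrow> (nat \<Rightarrow> 'a::field) \<Rightarrow> 'a endo set" where
  "S_even n u = {D \<in> g_sq n u. (\<forall>X\<in>gr_even n u. D X \<in> gr_even n u)
                              \<and> (\<forall>X\<in>gr_odd n u. D X \<in> gr_odd n u)}"

inductive_set endo_span :: "'a::field endo set \<Rightarrow> 'a endo set" for S where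
  zero: "endo_zero \<in> endo_span S"
| base: "D \<in> S \<Longrightarrow> D \<in> endo_span S"
| add: "D \<in> endo_span S \<Longrightarrow> E \<in> endo_span S \<Longrightarrow> (\<lambda>X k. D X k + E X k) \<in> endo_span S"
| smult: "D \<in> endo_span S \<Longrightarrow> (\<lambda>X k. c * D X k) \<in> endo_span S"

fun derived_series :: "'a::field endo set \<Rightarrow> nat \<Rightarrow> 'a endo set" where
  "derived_series L 0 = L"
| "derived_series L (Suc m) =
     endo_span {endo_br D E | D E. D \<in> derived_series L m \<and> E \<in> derived_series L m}"

definition solvable_lie :: "'a::field endo set \<Rightarrow> bool" where
  "solvable_lie L \<longleftrightarrow> (\<exists>m. derived_series L m = {endo_zero})"

end

theory Submission
  imports Defs
begin

text \<open>In characteristic 2 one has \<open>(ad y)\<^sup>2 = ad (y \<partial>y) + y(0)\<^sup>2 \<partial>\<^sup>2\<close> and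
  \<open>[ad h\<^sub>1 + a \<partial>\<^sup>2, ad h\<^sub>2 + b \<partial>\<^sup>2] = ad ([h\<^sub>1, h\<^sub>2] + a \<partial>\<^sup>2h\<^sub>2 + b \<partial>\<^sup>2h\<^sub>1)\<close>,
  so every element of g<1> is an operator \<open>ad h + c \<partial>\<^sup>2\<close> with \<open>h\<close> in O(1;n), and a
  commutator of two grading-preserving elements is some \<open>ad k\<close>. For even \<open>u\<close> one has
  \<open>D\<^sub>u \<partial>D\<^sub>u = D\<^sub>u\<close>, hence \<open>U\<^sup>2 = U\<close>, and an operator preserving both \<open>Ker U\<close> and \<open>Im U\<close>
  commutes with \<open>U\<close>. Then \<open>ad [D\<^sub>u, k]\<close> vanishes, so \<open>[D\<^sub>u, k] = 0\<close>; as \<open>D\<^sub>u = x + \<dots>\<close>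
  with no constant term, the constant term of \<open>[D\<^sub>u, k]\<close> is \<open>k(0)\<close>, which therefore vanishes.
  So the first derived algebra consists of operators \<open>ad k\<close> with \<open>k(0) = 0\<close>, each further
  bracket raises the order of vanishing of \<open>k\<close>, and the derived series reaches zero.\<close>

definition binom_conv :: "(nat \<Rightarrow> 'a::comm_semiring_1) \<Rightarrow> (nat \<Rightarrow> 'a) \<Rightarrow> nat \<Rightarrow> 'a" where
  "binom_conv f g k = (\<Sum>r\<le>k. of_nat (k choose r) * f r * g (k - r))"

lemma binom_conv_commute: "binom_conv f g k = binom_conv g f k"
  unfolding binom_conv_def
  by (rule sum.reindex_bij_witness[where i="\<lambda>r. k - r" and j="\<lambda>r. k - r"])
    (auto simp: binomial_symmetric[symmetric] mult_ac)

lemma binom_conv_assoc: "binom_conv (binom_conv f g) h k = binom_conv f (binom_conv g h) k"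
proof -
  define G where "G i j = of_nat (k choose (i+j)) * of_nat ((i+j) choose i) * f i * g j * h (k - (i+j))"
    for i j
  have G_eq: "G i j = of_nat (k choose i) * f i * (of_nat (k - i choose j) * g j * h (k - i - j))"
    if "i + j \<le> k" for i j
  proof -
    have "(k choose (i+j)) * ((i+j) choose i) = (k choose i) * ((k-i) choose j)"
      using choose_mult[of i "i+j" k] that by simp
    then have "(of_nat (k choose (i+j)) * of_nat ((i+j) choose i) :: 'a)
        = of_nat (k choose i) * of_nat ((k-i) choose j)"
      by (metis of_nat_mult)
    then show ?thesis
      unfolding G_def by (simp add: mult_ac diff_diff_left)
  qed
  have "binom_conv (binom_conv f g) h k = (\<Sum>r\<le>k. \<Sum>i\<le>r. G i (r - i))"
    unfolding binom_conv_def G_def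
    by (auto simp: sum_distrib_left sum_distrib_right mult_ac intro!: sum.cong)
  also have "\<dots> = (\<Sum>(i,j)\<in>{(i,j). i+j \<le> k}. G i j)"
    by (rule sum.triangle_reindex_eq[symmetric])
  also have "{(i,j). i+j \<le> k} = Sigma {..k} (\<lambda>i. {..k-i})"
    by auto
  also have "(\<Sum>(i,j)\<in>Sigma {..k} (\<lambda>i. {..k-i}). G i j) = (\<Sum>i\<le>k. \<Sum>j\<le>k-i. G i j)"
    by (subst sum.Sigma) auto
  also have "\<dots> = binom_conv f (binom_conv g h) k"
    unfolding binom_conv_def by (auto simp: sum_distrib_left G_eq intro!: sum.cong)
  finally show ?thesis .
qed

lemma binom_conv_Suc:
  "binom_conv f g (Suc k) = binom_conv (\<lambda>r. f (Suc r)) g k + binom_conv f (\<lambda>r. g (Suc r)) k"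
proof -
  have "binom_conv f (\<lambda>r. g (Suc r)) k
      = (\<Sum>r\<le>Suc k. of_nat (k choose r) * f r * g (Suc k - r))"
    unfolding binom_conv_def by (simp add: Suc_diff_le binomial_eq_0)
  also have "\<dots> = f 0 * g (Suc k) + (\<Sum>r\<le>k. of_nat (k choose Suc r) * f (Suc r) * g (k - r))"
    by (simp add: sum.atMost_Suc_shift del: sum.atMost_Suc)
  finally show ?thesis
    unfolding binom_conv_def
    by (simp add: sum.atMost_Suc_shift sum.distrib algebra_simps del: sum.atMost_Suc)
qed

lemma binom_conv_cong:
  "(\<And>r. r \<le> k \<Longrightarrow> f r = f' r) \<Longrightarrow> (\<And>r. r \<le> k \<Longrightarrow> g r = g' r)
    \<Longrightarrow> binom_conv f g k = binom_conv f' g' k"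
  unfolding binom_conv_def by (intro sum.cong) auto

lemma even_binomial_pow2:
  assumes "0 < r" "r < 2^n"
  shows "even (2^n choose r)"
proof (rule ccontr)
  assume odd: "odd (2^n choose r)"
  obtain m where m: "2^n = Suc m"
    by (metis not0_implies_Suc power_not_zero zero_neq_numeral)
  obtain s where s: "r = Suc s"
    using assms(1) by (metis gr0_implies_Suc)
  have "Suc m * (m choose s) = (Suc m choose Suc s) * Suc s"
    by (rule Suc_times_binomial_eq)
  then have "(2::nat)^n dvd (2^n choose r) * r"
    using m s by (metis dvd_triv_left)
  moreover have "coprime ((2::nat)^n) (2^n choose r)"
    using odd by (simp add: coprime_left_2_iff_odd)
  ultimately have "(2::nat)^n dvd r"
    by (simp add: coprime_dvd_mult_right_iff)
  then show False
    using assms by (simp add: nat_dvd_not_less)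
qed


definition dp_one :: "nat \<Rightarrow> 'a::field" where
  "dp_one = (\<lambda>k. if k = 0 then 1 else 0)"

lemma dp_mult_eq_binom_conv: "dp_mult n f g k = (if k < 2^n then binom_conv f g k else 0)"
  unfolding dp_mult_def binom_conv_def by simp

lemma dp_mult_in_dpO [simp]: "dp_mult n f g \<in> dpO n"
  and dp_deriv_in_dpO [simp]: "dp_deriv n f \<in> dpO n"
  and dp_one_in_dpO [simp]: "dp_one \<in> dpO n"
  and dpO_zero [simp]: "(\<lambda>_. 0) \<in> dpO n"
  unfolding dpO_def dp_mult_def dp_deriv_def dp_one_def by auto

lemma dpO_add [simp]: "f \<in> dpO n \<Longrightarrow> g \<in> dpO n \<Longrightarrow> (\<lambda>k. f k + g k) \<in> dpO n"
  and dpO_scale [simp]: "f \<in> dpO n \<Longrightarrow> (\<lambda>k. c * f k) \<in> dpO n"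
  unfolding dpO_def by simp_all

lemma two_le_two_power: "n \<ge> 1 \<Longrightarrow> (2::nat) \<le> 2^n"
  by (metis power_increasing power_one_right zero_less_numeral one_le_numeral)

lemma dp_x_in_dpO [simp]: "n \<ge> 1 \<Longrightarrow> dp_x \<in> dpO n"
  using two_le_two_power[of n] unfolding dpO_def dp_x_def by auto

lemma dp_mult_commute: "dp_mult n f g = dp_mult n g f"
  by (rule ext) (simp add: dp_mult_eq_binom_conv binom_conv_commute)

lemma dp_mult_assoc: "dp_mult n (dp_mult n f g) h = dp_mult n f (dp_mult n g h)"
proof (rule ext)
  fix k
  show "dp_mult n (dp_mult n f g) h k = dp_mult n f (dp_mult n g h) k"
  proof (cases "k < 2^n")
    case True
    have "binom_conv (dp_mult n f g) h k = binom_conv (binom_conv f g) h k"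
      and "binom_conv f (dp_mult n g h) k = binom_conv f (binom_conv g h) k"
      by (rule binom_conv_cong; use True in \<open>simp add: dp_mult_eq_binom_conv\<close>)+
    then show ?thesis
      using True by (simp add: dp_mult_eq_binom_conv binom_conv_assoc)
  qed (simp add: dp_mult_eq_binom_conv)
qed

lemma dp_mult_left_commute: "dp_mult n f (dp_mult n g h) = dp_mult n g (dp_mult n f h)"
  by (metis dp_mult_assoc dp_mult_commute)

lemma dp_mult_add_left: "dp_mult n (\<lambda>k. a k + b k) c = (\<lambda>k. dp_mult n a c k + dp_mult n b c k)"
  and dp_mult_add_right: "dp_mult n c (\<lambda>k. a k + b k) = (\<lambda>k. dp_mult n c a k + dp_mult n c b k)"
  and dp_mult_scale_left: "dp_mult n (\<lambda>k. e * a k) c = (\<lambda>k. e * dp_mult n a c k)"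
  and dp_mult_scale_right: "dp_mult n c (\<lambda>k. e * a k) = (\<lambda>k. e * dp_mult n c a k)"
  and dp_mult_zero_left: "dp_mult n (\<lambda>k. 0) c = (\<lambda>k. 0)"
  and dp_mult_zero_right: "dp_mult n c (\<lambda>k. 0) = (\<lambda>k. 0)"
  unfolding dp_mult_def by (auto simp: sum.distrib sum_distrib_left algebra_simps)

lemma dp_deriv_add: "dp_deriv n (\<lambda>k. a k + b k) = (\<lambda>k. dp_deriv n a k + dp_deriv n b k)"
  and dp_deriv_scale: "dp_deriv n (\<lambda>k. e * a k) = (\<lambda>k. e * dp_deriv n a k)"
  and dp_deriv_zero: "dp_deriv n (\<lambda>k. 0) = (\<lambda>k. 0)"
  unfolding dp_deriv_def by auto

lemma dp_mult_one_left: "f \<in> dpO n \<Longrightarrow> dp_mult n dp_one f = f"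
  by (rule ext) (auto simp: dp_mult_eq_binom_conv binom_conv_def dp_one_def dpO_def
      sum.atMost_shift simp del: sum.atMost_Suc)

lemma dp_mult_one_right: "f \<in> dpO n \<Longrightarrow> dp_mult n f dp_one = f"
  by (simp add: dp_mult_commute[of n f] dp_mult_one_left)

lemma dp_deriv_one [simp]: "dp_deriv n dp_one = (\<lambda>k. 0)"
  unfolding dp_deriv_def dp_one_def by auto

lemma dp_deriv_x: "n \<ge> 1 \<Longrightarrow> dp_deriv n dp_x = dp_one"
  using two_le_two_power[of n] unfolding dp_deriv_def dp_x_def dp_one_def by (auto intro!: ext)

lemma binom_conv_x: "binom_conv dp_x g k = of_nat k * g (k - 1)"
proof -
  have "binom_conv dp_x g k = (\<Sum>r\<le>k. if r = 1 then of_nat (k choose 1) * g (k - 1) else 0)"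
    unfolding binom_conv_def dp_x_def by (intro sum.cong) auto
  then show ?thesis
    by (cases k) simp_all
qed

lemma vbr_in_dpO [simp]: "vbr n f g \<in> dpO n"
  unfolding vbr_def dpO_def dp_mult_def by simp

lemma vbr_zero_right [simp]: "vbr n h (\<lambda>_. 0) = (\<lambda>_. 0)"
  unfolding vbr_def by (simp add: dp_mult_zero_left dp_mult_zero_right dp_deriv_zero)

lemma vbr_one_left: "Y \<in> dpO n \<Longrightarrow> vbr n dp_one Y = dp_deriv n Y"
  unfolding vbr_def by (simp add: dp_mult_one_left dp_mult_zero_right)

lemma vect1_subset_dpO: "vect1 n \<subseteq> dpO n"
proof
  fix X assume "X \<in> vect1 n"
  then show "X \<in> dpO n"
    unfolding vect1_def by (induction rule: lin_span.induct) (auto simp: vect_def)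
qed

lemma vect1_zero [simp]: "(\<lambda>_. 0) \<in> vect1 n"
  unfolding vect1_def by (rule lin_span.zero)

lemma vect1_add [simp]: "X \<in> vect1 n \<Longrightarrow> Y \<in> vect1 n \<Longrightarrow> (\<lambda>k. X k + Y k) \<in> vect1 n"
  unfolding vect1_def by (rule lin_span.add)

lemma vect1_scale [simp]: "X \<in> vect1 n \<Longrightarrow> (\<lambda>k. c * X k) \<in> vect1 n"
  unfolding vect1_def by (rule lin_span.smult)

lemma vbr_truncate_left: "vbr n (\<lambda>r. if r < 2^n then h r else 0) Y = vbr n h Y"
  unfolding vbr_def dp_mult_def dp_deriv_def by (auto intro!: ext sum.cong)

lemma vect1_vbr [simp]: "Y \<in> dpO n \<Longrightarrow> vbr n h Y \<in> vect1 n"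
proof -
  assume "Y \<in> dpO n"
  moreover have "(\<lambda>r. if r < 2^n then h r else 0) \<in> dpO n"
    unfolding dpO_def by simp
  ultimately have "vbr n (\<lambda>r. if r < 2^n then h r else 0) Y \<in> vect1 n"
    unfolding vect1_def vect_def by (intro lin_span.base) blast
  then show ?thesis
    by (simp only: vbr_truncate_left)
qed

lemma vect1_dp_deriv [simp]: "Y \<in> dpO n \<Longrightarrow> dp_deriv n Y \<in> vect1 n"
  by (metis vbr_one_left vect1_vbr)

definition dp_even :: "(nat \<Rightarrow> 'a::field) \<Rightarrow> bool" where
  "dp_even g \<longleftrightarrow> (\<forall>k. odd k \<longrightarrow> g k = 0)"

definition dp_odd :: "(nat \<Rightarrow> 'a::field) \<Rightarrow> bool" where
  "dp_odd g \<longleftrightarrow> (\<forall>k. even k \<longrightarrow> g k = 0)"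

lemma dp_deriv_even: "dp_even a \<Longrightarrow> dp_odd (dp_deriv n a)"
  and dp_deriv_odd: "dp_odd a \<Longrightarrow> dp_even (dp_deriv n a)"
  unfolding dp_even_def dp_odd_def dp_deriv_def by auto

lemma dp_mult_even:
  assumes "dp_even a" "dp_even b"
  shows "dp_even (dp_mult n a b)"
proof -
  have "of_nat (k choose r) * a r * b (k - r) = 0" if "odd k" "r \<le> k" for k r
  proof -
    from that have "odd r \<or> odd (k - r)"
      by auto
    then show ?thesis
      using assms unfolding dp_even_def by (elim disjE) simp_all
  qed
  then show ?thesis
    unfolding dp_even_def dp_mult_eq_binom_conv binom_conv_def by (simp add: sum.neutral)
qed

section \<open>The operators \<open>ad h + c \<partial>\<^sup>2\<close>\<close>

definition ad_d2 :: "nat \<Rightarrow> (nat \<Rightarrow> 'a::field) \<Rightarrow> 'a \<Rightarrow> 'a endo" where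
  "ad_d2 n h c = (\<lambda>Y. if Y \<in> vect1 n
      then (\<lambda>k. vbr n h Y k + c * dp_deriv n (dp_deriv n Y) k) else (\<lambda>_. 0))"

definition ad_d2_ops :: "nat \<Rightarrow> 'a::field endo set" where
  "ad_d2_ops n = {ad_d2 n h c | h c. h \<in> dpO n}"

lemma ad_d2_apply: "Y \<in> vect1 n \<Longrightarrow> ad_d2 n h c Y = (\<lambda>k. vbr n h Y k + c * dp_deriv n (dp_deriv n Y) k)"
  and ad_d2_apply_outside: "Y \<notin> vect1 n \<Longrightarrow> ad_d2 n h c Y = (\<lambda>_. 0)"
  unfolding ad_d2_def by simp_all

lemma ad_d2_zero: "ad_d2 n (\<lambda>_. 0) 0 = endo_zero"
  by (rule ext) (simp add: ad_d2_def endo_zero_def vbr_def dp_mult_zero_left dp_mult_zero_right dp_deriv_zero)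

lemma ad_g_eq_ad_d2: "ad_g n X = ad_d2 n X 0"
  unfolding ad_g_def ad_d2_def by (intro ext) simp

lemma ad_d2_mem_vect1: "ad_d2 n h c Y \<in> vect1 n"
  using vect1_subset_dpO[of n] by (auto simp: ad_d2_def)

lemma ad_d2_zero_right [simp]: "ad_d2 n h c (\<lambda>_. 0) = (\<lambda>_. 0)"
  by (simp add: ad_d2_def dp_deriv_zero)

context
  assumes char2: "(2::'a::field) = 0"
begin

lemma of_nat_even_eq_0: "even m \<Longrightarrow> (of_nat m :: 'a) = 0"
  using char2 by (auto elim!: evenE)

lemma of_nat_odd_eq_1: "odd m \<Longrightarrow> (of_nat m :: 'a) = 1"
  using char2 by (auto elim!: oddE)

lemma add_self_eq_0: "(x::'a) + x = 0"
  using char2 by (metis mult_2 mult_zero_left)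

lemma add_self_cancel: "(x::'a) + (x + y) = y"
  by (simp add: add.assoc[symmetric] add_self_eq_0)

lemma diff_eq_add: "(x::'a) - y = x + y"
  by (metis add_self_eq_0 add_eq_0_iff diff_conv_add_uminus)

text \<open>Truncation at degree \<open>2^n\<close> loses, in the coefficient of \<open>x^(2^n - 1)\<close> of
  \<open>\<partial>(a b)\<close>, only multiples of \<open>2^n choose r\<close> with \<open>0 < r < 2^n\<close>; these are even.\<close>

lemma dp_deriv_mult:
  "dp_deriv n (dp_mult n a b)
     = (\<lambda>k. dp_mult n (dp_deriv n a) b k + dp_mult n a (dp_deriv n (b::nat \<Rightarrow> 'a)) k)"
proof (rule ext)
  fix k
  define a' where "a' r = (if r < 2^n then a r else 0)" for r
  define b' where "b' r = (if r < 2^n then b r else 0)" for r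
  show "dp_deriv n (dp_mult n a b) k = dp_mult n (dp_deriv n a) b k + dp_mult n a (dp_deriv n b) k"
  proof (cases "k < 2^n")
    case False
    then show ?thesis by (simp add: dp_deriv_def dp_mult_eq_binom_conv)
  next
    case True
    have "binom_conv (dp_deriv n a) b k = binom_conv (\<lambda>r. a' (Suc r)) b' k"
      and "binom_conv a (dp_deriv n b) k = binom_conv a' (\<lambda>r. b' (Suc r)) k"
      by (rule binom_conv_cong; use True in \<open>simp add: dp_deriv_def a'_def b'_def\<close>)+
    then have rhs: "dp_mult n (dp_deriv n a) b k + dp_mult n a (dp_deriv n b) k
        = binom_conv a' b' (Suc k)"
      using True by (simp add: dp_mult_eq_binom_conv binom_conv_Suc)
    show ?thesis
    proof (cases "Suc k < 2^n")
      case True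
      have "binom_conv a' b' (Suc k) = binom_conv a b (Suc k)"
        by (rule binom_conv_cong) (use True in \<open>simp_all add: a'_def b'_def\<close>)
      then show ?thesis
        using rhs True by (simp add: dp_deriv_def dp_mult_eq_binom_conv)
    next
      case False
      with \<open>k < 2^n\<close> have top: "Suc k = 2^n" by simp
      have "of_nat (Suc k choose r) * a' r * b' (Suc k - r) = 0" if "r \<le> Suc k" for r
      proof (cases "r = 0 \<or> r = 2^n")
        case True
        then show ?thesis using top by (auto simp: a'_def b'_def)
      next
        case False
        then have "even (Suc k choose r)"
          using that top even_binomial_pow2[of r n] by simp
        then show ?thesis by (simp add: of_nat_even_eq_0)
      qed
      then have "binom_conv a' b' (Suc k) = 0"
        unfolding binom_conv_def by (intro sum.neutral) auto
      then show ?thesis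
        using rhs False by (simp add: dp_deriv_def)
    qed
  qed
qed

lemma dp_mult_self: "dp_mult n a a = (\<lambda>k. a 0 * a 0 * (dp_one k :: 'a))"
proof (rule ext)
  fix k
  show "dp_mult n a a k = a 0 * a 0 * dp_one k"
  proof (cases k)
    case 0
    then show ?thesis by (simp add: dp_mult_eq_binom_conv binom_conv_def dp_one_def)
  next
    case (Suc j)
    have "dp_deriv n (dp_mult n a a) = (\<lambda>_. 0)"
      by (simp add: dp_deriv_mult dp_mult_commute[of n "dp_deriv n a"] add_self_eq_0)
    then have "dp_deriv n (dp_mult n a a) j = 0"
      by simp
    then show ?thesis
      using Suc by (cases "k < 2^n") (simp_all add: dp_deriv_def dp_mult_eq_binom_conv dp_one_def)
  qed
qed

lemma dp_mult_self_left: "dp_mult n a (dp_mult n a t) = (\<lambda>k. a 0 * a 0 * dp_mult n dp_one (t::nat \<Rightarrow> 'a) k)"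
  by (simp add: dp_mult_assoc[symmetric] dp_mult_self dp_mult_scale_left)

lemma vbr_char2:
  "vbr n f g = (\<lambda>k. dp_mult n f (dp_deriv n g) k + dp_mult n g (dp_deriv n (f::nat \<Rightarrow> 'a)) k)"
  unfolding vbr_def by (simp add: diff_eq_add)

lemmas dp_ring_simps = dp_mult_add_left dp_mult_add_right dp_mult_scale_left dp_mult_scale_right
  dp_mult_zero_left dp_mult_zero_right dp_deriv_add dp_deriv_scale dp_deriv_zero dp_deriv_mult
  dp_mult_assoc dp_mult_commute dp_mult_left_commute add_self_eq_0 add_self_cancel
  add.assoc add.commute add.left_commute

lemma vbr_jacobi:
  "vbr n f (vbr n g h) = (\<lambda>k. vbr n (vbr n f g) h k + vbr n g (vbr n f (h::nat \<Rightarrow> 'a)) k)"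
  by (rule ext) (simp add: vbr_char2 dp_ring_simps)

lemma vbr_add_right: "vbr n h (\<lambda>k. X k + Y k) = (\<lambda>k. vbr n h X k + vbr n h (Y::nat \<Rightarrow> 'a) k)"
  by (rule ext) (simp add: vbr_char2 dp_ring_simps)

lemma vbr_vbr_self:
  "vbr n y (vbr n y X)
     = (\<lambda>k. vbr n (dp_mult n y (dp_deriv n y)) X k + y 0 * y 0 * dp_deriv n (dp_deriv n (X::nat \<Rightarrow> 'a)) k)"
  by (rule ext) (simp add: vbr_char2 dp_ring_simps ring_distribs dp_mult_self_left dp_mult_self dp_mult_one_left char2)

lemma ad_d2_in_Der: "(h::nat \<Rightarrow> 'a) \<in> dpO n \<Longrightarrow> ad_d2 n h c \<in> Der n"
  using vect1_subset_dpO[of n]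
  by (auto simp: Der_def ad_d2_apply ad_d2_apply_outside ad_d2_mem_vect1 subsetD)
    (auto simp: vbr_char2 dp_ring_simps ring_distribs mult_ac intro!: ext)

lemma ad_d2_add:
  "(\<lambda>X k. ad_d2 n h\<^sub>1 (a::'a) X k + ad_d2 n h\<^sub>2 b X k) = ad_d2 n (\<lambda>k. h\<^sub>1 k + h\<^sub>2 k) (a + b)"
  by (intro ext) (simp add: ad_d2_def vbr_char2 dp_ring_simps ring_distribs)

lemma ad_d2_scale: "(\<lambda>X k. c * ad_d2 n h (a::'a) X k) = ad_d2 n (\<lambda>k. c * h k) (c * a)"
  by (intro ext) (simp add: ad_d2_def vbr_char2 dp_ring_simps ring_distribs mult_ac)

lemma ad_d2_bracket:
  assumes "h\<^sub>1 \<in> dpO n" "h\<^sub>2 \<in> dpO n"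
  shows "endo_br (ad_d2 n h\<^sub>1 (a::'a)) (ad_d2 n h\<^sub>2 b)
    = ad_d2 n (\<lambda>k. vbr n h\<^sub>1 h\<^sub>2 k + a * dp_deriv n (dp_deriv n h\<^sub>2) k
                   + b * dp_deriv n (dp_deriv n h\<^sub>1) k) 0"
proof (rule ext)
  fix X
  show "endo_br (ad_d2 n h\<^sub>1 a) (ad_d2 n h\<^sub>2 b) X = ad_d2 n (\<lambda>k. vbr n h\<^sub>1 h\<^sub>2 k
      + a * dp_deriv n (dp_deriv n h\<^sub>2) k + b * dp_deriv n (dp_deriv n h\<^sub>1) k) 0 X"
  proof (cases "X \<in> vect1 n")
    case True
    then show ?thesis
      using assms vect1_subset_dpO[of n]
      unfolding endo_br_def ad_d2_apply[OF ad_d2_mem_vect1]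
      by (simp add: ad_d2_apply subsetD) (simp add: vbr_char2 dp_ring_simps ring_distribs diff_eq_add char2)
  qed (simp add: endo_br_def ad_d2_apply_outside)
qed

lemma lie_subalg_ad_d2_ops: "lie_subalg (ad_d2_ops n :: 'a endo set)"
  unfolding lie_subalg_def ad_d2_ops_def
  using ad_d2_zero[of n, symmetric] ad_d2_add ad_d2_scale ad_d2_bracket
  by fastforce

lemma ad_g_square:
  "endo_comp (ad_g n (y::nat \<Rightarrow> 'a)) (ad_g n y) = ad_d2 n (dp_mult n y (dp_deriv n y)) (y 0 * y 0)"
  using vect1_subset_dpO[of n]
  by (auto simp: endo_comp_def ad_g_eq_ad_d2 ad_d2_def vbr_vbr_self subsetD intro!: ext)

lemma g_sq_subset_ad_d2_ops: "g_sq n (u::nat \<Rightarrow> 'a) \<subseteq> ad_d2_ops n"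
  unfolding g_sq_def
proof (rule Inter_lower, intro CollectI conjI ballI)
  show "(ad_d2_ops n :: 'a endo set) \<subseteq> Der n"
    unfolding ad_d2_ops_def using ad_d2_in_Der by auto
  show "lie_subalg (ad_d2_ops n :: 'a endo set)"
    by (rule lie_subalg_ad_d2_ops)
  show "ad_g n X \<in> ad_d2_ops n" if "X \<in> vect1 n" for X
    using that vect1_subset_dpO unfolding ad_d2_ops_def ad_g_eq_ad_d2 by auto
  show "endo_comp (ad_g n y) (ad_g n y) \<in> ad_d2_ops n" for y :: "nat \<Rightarrow> 'a"
    unfolding ad_d2_ops_def ad_g_square by auto
qed

section \<open>Filtration by order of vanishing\<close>

definition ad_vanishing :: "nat \<Rightarrow> nat \<Rightarrow> 'a endo set" where
  "ad_vanishing n m = {ad_d2 n h 0 | h. h \<in> dpO n \<and> (\<forall>r\<le>m. h r = 0)}"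

lemma endo_span_ad_vanishing:
  assumes "S \<subseteq> ad_vanishing n m"
  shows "endo_span S \<subseteq> (ad_vanishing n m :: 'a endo set)"
proof
  fix D assume "D \<in> endo_span S"
  then show "D \<in> ad_vanishing n m"
  proof (induction rule: endo_span.induct)
    case zero
    have "endo_zero = ad_d2 n (\<lambda>_. 0::'a) 0"
      by (rule ad_d2_zero[symmetric])
    then show ?case
      unfolding ad_vanishing_def by auto
  next
    case (base D)
    then show ?case using assms by auto
  next
    case (add D E)
    then show ?case
      unfolding ad_vanishing_def using ad_d2_add[of n _ 0 _ 0] by fastforce
  next
    case (smult D c)
    then show ?case
      unfolding ad_vanishing_def using ad_d2_scale[of c n _ 0] by fastforce
  qed
qed

text \<open>No product \<open>h\<^sub>1(r) h\<^sub>2(s)\<close> with \<open>r, s > m\<close> reaches degree \<open>\<le> m + 1\<close> in \<open>[h\<^sub>1, h\<^sub>2]\<close>,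
  except \<open>h\<^sub>1(1) h\<^sub>2(1)\<close> for \<open>m = 0\<close>, which occurs twice and cancels.\<close>

lemma vbr_vanishing:
  assumes "\<forall>r\<le>m. h\<^sub>1 r = 0" "\<forall>r\<le>m. h\<^sub>2 r = 0" "k \<le> Suc m"
  shows "vbr n h\<^sub>1 h\<^sub>2 k = (0::'a)"
proof -
  have conv: "binom_conv a (dp_deriv n b) k = (if k = 1 then a 1 * b 1 else 0)"
    if a: "\<forall>r\<le>m. a r = 0" and b: "\<forall>r\<le>m. b r = (0::'a)" and "k < 2^n" for a b
  proof -
    have "binom_conv a (dp_deriv n b) k = (\<Sum>r\<le>k. if r = 1 \<and> k = 1 then a 1 * b 1 else 0)"
      unfolding binom_conv_def
    proof (rule sum.cong[OF refl])
      fix r assume "r \<in> {..k}"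
      then show "of_nat (k choose r) * a r * dp_deriv n b (k - r) = (if r = 1 \<and> k = 1 then a 1 * b 1 else 0)"
        using a b assms(3) \<open>k < 2^n\<close> by (cases "r \<le> m") (auto simp: dp_deriv_def)
    qed
    then show ?thesis
      by (cases "k = 1") auto
  qed
  show ?thesis
    using conv[OF assms(1,2)] conv[OF assms(2,1)]
    by (cases "k < 2^n") (simp_all add: vbr_char2 dp_mult_eq_binom_conv mult.commute add_self_eq_0)
qed

lemma bracket_ad_vanishing:
  assumes "D \<in> ad_vanishing n m" "E \<in> ad_vanishing n m"
  shows "endo_br D E \<in> (ad_vanishing n (Suc m) :: 'a endo set)"
proof -
  obtain h\<^sub>1 h\<^sub>2 where h: "D = ad_d2 n h\<^sub>1 0" "h\<^sub>1 \<in> dpO n" "\<forall>r\<le>m. h\<^sub>1 r = 0"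
      "E = ad_d2 n h\<^sub>2 0" "h\<^sub>2 \<in> dpO n" "\<forall>r\<le>m. h\<^sub>2 r = 0"
    using assms unfolding ad_vanishing_def by auto
  have "endo_br D E = ad_d2 n (vbr n h\<^sub>1 h\<^sub>2) 0"
    using ad_d2_bracket[OF h(2) h(5), of 0 0] by (simp add: h(1,4))
  moreover have "\<forall>r\<le>Suc m. vbr n h\<^sub>1 h\<^sub>2 r = 0"
    using vbr_vanishing[OF h(3) h(6)] by blast
  ultimately show ?thesis
    unfolding ad_vanishing_def by auto
qed

lemma ad_vanishing_top: "ad_vanishing n (2^n) = {endo_zero :: 'a endo}"
proof -
  have "h = (\<lambda>_. 0)" if "h \<in> dpO n" "\<forall>r\<le>2^n. h r = (0::'a)" for h
  proof
    fix r
    show "h r = 0"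
      using that unfolding dpO_def by (cases "r \<le> 2^n") auto
  qed
  moreover have "(\<lambda>_. 0::'a) \<in> dpO n \<and> (\<forall>r\<le>2^n. (0::'a) = 0)"
    by simp
  ultimately show ?thesis
    unfolding ad_vanishing_def ad_d2_zero[of n, symmetric] by blast
qed

lemma vect1_centralizer_trivial:
  assumes n: "n \<ge> 2" and w: "w \<in> dpO n"
    and central: "\<And>Y. Y \<in> vect1 n \<Longrightarrow> vbr n w Y = (\<lambda>_. 0::'a)"
  shows "w = (\<lambda>_. 0)"
proof -
  have n_pos: "n \<ge> 1"
    using n by simp
  define x2 :: "nat \<Rightarrow> 'a" where "x2 = (\<lambda>k. if k = 2 then 1 else 0)"
  have "(4::nat) \<le> 2^n"
    using power_increasing[OF n, of "2::nat"] by simp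
  then have "x2 \<in> dpO n" and "dp_deriv n x2 = dp_x"
    unfolding x2_def dpO_def dp_deriv_def dp_x_def by (auto intro!: ext)
  then have x_vect1: "(dp_x :: nat \<Rightarrow> 'a) \<in> vect1 n"
    by (metis vect1_dp_deriv)
  have "dp_one \<in> vect1 n"
    using vect1_dp_deriv[OF dp_x_in_dpO[OF n_pos]] by (simp add: dp_deriv_x[OF n_pos])
  then have "vbr n w dp_one = (\<lambda>_. 0)"
    by (rule central)
  moreover have "vbr n w dp_one = dp_deriv n w"
    by (simp add: vbr_char2 dp_mult_zero_right dp_mult_one_left)
  ultimately have "dp_deriv n w = (\<lambda>_. 0)"
    by simp
  then have "vbr n w dp_x = w"
    using n_pos w by (simp add: vbr_char2 dp_deriv_x dp_mult_zero_right dp_mult_one_right)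
  then show ?thesis
    using central[OF x_vect1] by simp
qed

section \<open>The grading defined by \<open>D\<^sub>u\<close>\<close>

lemma dp_mult_x_odd:
  assumes "dp_odd g"
  shows "dp_mult n dp_x g = (\<lambda>_. 0::'a)"
proof (rule ext)
  fix k
  show "dp_mult n dp_x g k = 0"
  proof (cases "even k")
    case False
    then have "g (k - 1) = 0"
      using assms by (simp add: dp_odd_def)
    then show ?thesis
      by (simp add: dp_mult_eq_binom_conv binom_conv_x)
  qed (simp add: dp_mult_eq_binom_conv binom_conv_x of_nat_even_eq_0)
qed

lemma dp_deriv_even_eq_x_mult:
  assumes "dp_even (u::nat \<Rightarrow> 'a)"
  shows "dp_deriv n u = dp_mult n dp_x (dp_deriv n (dp_deriv n u))"
proof (rule ext)
  fix k
  show "dp_deriv n u k = dp_mult n dp_x (dp_deriv n (dp_deriv n u)) k"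
  proof (cases "even k")
    case True
    then have "u (k + 1) = 0"
      using assms by (simp add: dp_even_def)
    with True show ?thesis
      by (simp add: dp_deriv_def dp_mult_eq_binom_conv binom_conv_x of_nat_even_eq_0)
  next
    case False
    then have "(of_nat k :: 'a) = 1"
      by (rule of_nat_odd_eq_1)
    moreover have "k \<ge> 1"
      using False by (cases k) auto
    ultimately show ?thesis
      by (simp add: dp_deriv_def dp_mult_eq_binom_conv binom_conv_x)
  qed
qed

context
  fixes n :: nat and u :: "nat \<Rightarrow> 'a"
  assumes n_pos: "n \<ge> 1" and u_in_dpO: "u \<in> dpO n" and u_0: "u 0 = 0" and u_even: "dp_even u"
begin

lemma D_u_0: "D_u n u 0 = 0"
  unfolding D_u_def by (simp add: u_0 dp_x_def dp_mult_eq_binom_conv binom_conv_def)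

lemma D_u_1: "D_u n u 1 = 1"
proof -
  have "u 1 = 0"
    using u_even by (simp add: dp_even_def)
  moreover have "(1::nat) < 2^n"
    using two_le_two_power[OF n_pos] by simp
  ultimately show ?thesis
    unfolding D_u_def by (simp add: u_0 dp_x_def dp_mult_eq_binom_conv binom_conv_x binom_conv_def)
qed

text \<open>Writing \<open>D\<^sub>u = u + x w\<close> with \<open>w = 1 + u \<partial>\<^sup>2u\<close>, one has \<open>\<partial>D\<^sub>u = x \<partial>\<^sup>2u + w\<close>
  (as \<open>\<partial>u = x \<partial>\<^sup>2u\<close> and \<open>x \<partial>w = 0\<close>), \<open>u w = u\<close> and \<open>w\<^sup>2 = 1\<close>.\<close>

lemma D_u_mult_deriv: "dp_mult n (D_u n u) (dp_deriv n (D_u n u)) = D_u n u"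
proof -
  define q where "q = dp_deriv n (dp_deriv n u)"
  define p where "p = dp_mult n u q"
  define w where "w = (\<lambda>k. dp_one k + p k)"
  have p_0: "p 0 = 0"
    by (simp add: p_def dp_mult_eq_binom_conv binom_conv_def u_0)
  have w_even: "dp_even w"
    unfolding w_def p_def q_def
    using dp_mult_even[OF u_even dp_deriv_odd[OF dp_deriv_even[OF u_even]]]
    by (auto simp: dp_even_def dp_one_def)
  have w_in_dpO: "w \<in> dpO n"
    unfolding w_def p_def by simp
  have D: "D_u n u = (\<lambda>k. u k + dp_mult n dp_x w k)"
    unfolding D_u_def w_def p_def q_def using n_pos
    by (simp add: dp_mult_add_right dp_mult_one_right add.assoc)
  have dD: "dp_deriv n (D_u n u) = (\<lambda>k. dp_mult n dp_x q k + w k)"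
    unfolding D q_def using n_pos
    by (simp add: dp_deriv_add dp_deriv_mult dp_deriv_x dp_mult_one_left w_in_dpO
        dp_mult_x_odd[OF dp_deriv_even[OF w_even]] dp_deriv_even_eq_x_mult[OF u_even, of n, symmetric])
  have uw: "dp_mult n u w = u"
    unfolding w_def p_def
    by (simp add: dp_mult_add_right dp_mult_one_right u_in_dpO dp_mult_self_left u_0 dp_mult_zero_left)
  have ww: "dp_mult n w w = dp_one"
    by (simp add: dp_mult_self w_def p_0 dp_one_def)
  have xwxq: "dp_mult n dp_x (dp_mult n w (dp_mult n dp_x q)) = (\<lambda>_. 0)"
    by (simp add: dp_mult_assoc dp_mult_left_commute[of n w] dp_mult_self_left dp_x_def dp_mult_zero_left)
  have "dp_mult n (D_u n u) (dp_deriv n (D_u n u))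
      = (\<lambda>k. dp_mult n u (dp_mult n dp_x q) k + dp_mult n u w k
           + dp_mult n (dp_mult n dp_x w) (dp_mult n dp_x q) k + dp_mult n (dp_mult n dp_x w) w k)"
    unfolding dD by (subst D) (simp only: dp_mult_add_left dp_mult_add_right add.assoc)
  also have "\<dots> = (\<lambda>k. dp_mult n dp_x p k + u k + dp_x k)"
    using n_pos by (simp add: p_def dp_mult_left_commute[of n u] uw xwxq dp_mult_assoc ww dp_mult_one_right)
  also have "\<dots> = D_u n u"
    unfolding D_u_def p_def q_def by (simp add: add_ac)
  finally show ?thesis .
qed

lemma U_idempotent: "vbr n (D_u n u) (vbr n (D_u n u) X) = vbr n (D_u n u) X"
  by (simp add: vbr_vbr_self D_u_mult_deriv D_u_0)

lemma gr_even_diff: "X \<in> gr_even n u \<Longrightarrow> Y \<in> gr_even n u \<Longrightarrow> (\<lambda>k. X k - Y k) \<in> gr_even n u"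
  unfolding gr_even_def by (simp add: diff_eq_add vbr_add_right)

lemma gr_odd_diff:
  assumes "X \<in> gr_odd n u" "Y \<in> gr_odd n u"
  shows "(\<lambda>k. X k - Y k) \<in> gr_odd n u"
proof -
  obtain Z\<^sub>1 Z\<^sub>2 where Z: "X = vbr n (D_u n u) Z\<^sub>1" "Z\<^sub>1 \<in> vect1 n" "Y = vbr n (D_u n u) Z\<^sub>2" "Z\<^sub>2 \<in> vect1 n"
    using assms unfolding gr_odd_def by blast
  then have "(\<lambda>k. X k - Y k) = vbr n (D_u n u) (\<lambda>k. Z\<^sub>1 k + Z\<^sub>2 k)"
    by (simp add: diff_eq_add vbr_add_right)
  then show ?thesis
    unfolding gr_odd_def using Z by auto
qed

text \<open>Since \<open>U\<close> is idempotent and \<open>-1 = 1\<close>, every \<open>X\<close> splits as \<open>(X + U X) + U X\<close> with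
  \<open>X + U X \<in> Ker U\<close> and \<open>U X \<in> Im U\<close>.\<close>

lemma grading_preserving_commutes_U:
  assumes even: "\<forall>X\<in>gr_even n u. ad_d2 n h 0 X \<in> gr_even n u"
    and odd: "\<forall>X\<in>gr_odd n u. ad_d2 n h 0 X \<in> gr_odd n u"
    and X: "X \<in> vect1 n"
  shows "vbr n (D_u n u) (vbr n h X) = vbr n h (vbr n (D_u n u) X)"
proof -
  define UX where "UX = vbr n (D_u n u) X"
  define E where "E = (\<lambda>k. X k + UX k)"
  have UX: "UX \<in> vect1 n"
    unfolding UX_def using X vect1_subset_dpO by (blast intro: vect1_vbr)
  have E: "E \<in> gr_even n u"
    unfolding gr_even_def E_def using X UX U_idempotent[of X]
    by (simp add: vbr_add_right UX_def add_self_eq_0)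
  then have "ad_d2 n h 0 E = vbr n h E"
    unfolding gr_even_def by (simp add: ad_d2_apply)
  then have U_E: "vbr n (D_u n u) (vbr n h E) = (\<lambda>_. 0)"
    using even E unfolding gr_even_def by auto
  have "UX \<in> gr_odd n u"
    unfolding gr_odd_def UX_def using X by blast
  then have "ad_d2 n h 0 UX \<in> gr_odd n u"
    using odd by blast
  then obtain Z where "vbr n h UX = vbr n (D_u n u) Z"
    unfolding gr_odd_def ad_d2_apply[OF UX] by auto
  then have U_UX: "vbr n (D_u n u) (vbr n h UX) = vbr n h UX"
    by (simp add: U_idempotent)
  have "X = (\<lambda>k. E k + UX k)"
    unfolding E_def by (simp add: add.assoc add_self_eq_0)
  then have "vbr n h X = (\<lambda>k. vbr n h E k + vbr n h UX k)"
    by (simp only: vbr_add_right[symmetric])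
  then show ?thesis
    using U_E U_UX by (simp add: vbr_add_right UX_def)
qed

lemma grading_preserving_const_coeff:
  assumes n: "n \<ge> 2" and h: "h \<in> dpO n"
    and even: "\<forall>X\<in>gr_even n u. ad_d2 n h 0 X \<in> gr_even n u"
    and odd: "\<forall>X\<in>gr_odd n u. ad_d2 n h 0 X \<in> gr_odd n u"
  shows "h 0 = 0"
proof -
  have "vbr n (vbr n (D_u n u) h) Y = (\<lambda>_. 0)" if "Y \<in> vect1 n" for Y
  proof -
    have "(\<lambda>k. vbr n (vbr n (D_u n u) h) Y k + vbr n h (vbr n (D_u n u) Y) k)
        = vbr n h (vbr n (D_u n u) Y)"
      using vbr_jacobi[of n "D_u n u" h Y] grading_preserving_commutes_U[OF even odd that] by simp
    then show ?thesis
      by (metis add_cancel_left_left)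
  qed
  then have "vbr n (D_u n u) h = (\<lambda>_. 0)"
    by (rule vect1_centralizer_trivial[OF n vbr_in_dpO])
  moreover have "vbr n (D_u n u) h 0 = h 0"
    using two_le_two_power[OF n_pos] D_u_0 D_u_1
    by (simp add: vbr_char2 dp_mult_eq_binom_conv binom_conv_def dp_deriv_def)
  ultimately show ?thesis
    by simp
qed

lemma S_even_bracket_const_coeff:
  assumes n: "n \<ge> 2" and D: "D \<in> S_even n u" and E: "E \<in> S_even n u"
  shows "endo_br D E \<in> ad_vanishing n 0"
proof -
  have "D \<in> ad_d2_ops n" "E \<in> ad_d2_ops n"
    using D E g_sq_subset_ad_d2_ops unfolding S_even_def by auto
  then obtain h\<^sub>1 a h\<^sub>2 b where h: "D = ad_d2 n h\<^sub>1 a" "h\<^sub>1 \<in> dpO n" "E = ad_d2 n h\<^sub>2 b" "h\<^sub>2 \<in> dpO n"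
    unfolding ad_d2_ops_def by blast
  define k where "k = (\<lambda>j. vbr n h\<^sub>1 h\<^sub>2 j + a * dp_deriv n (dp_deriv n h\<^sub>2) j
                       + b * dp_deriv n (dp_deriv n h\<^sub>1) j)"
  have k: "k \<in> dpO n"
    unfolding k_def by simp
  have br: "endo_br D E = ad_d2 n k 0"
    unfolding h(1,3) k_def by (rule ad_d2_bracket[OF h(2,4)])
  have "\<forall>X\<in>gr_even n u. ad_d2 n k 0 X \<in> gr_even n u"
    and "\<forall>X\<in>gr_odd n u. ad_d2 n k 0 X \<in> gr_odd n u"
    using D E unfolding br[symmetric] endo_br_def S_even_def
    by (auto intro!: gr_even_diff gr_odd_diff)
  then have "k 0 = 0"
    using grading_preserving_const_coeff[OF n k] by blast
  then show ?thesis
    unfolding ad_vanishing_def br using k by auto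
qed

lemma derived_series_S_even_Suc:
  assumes "n \<ge> 2"
  shows "derived_series (S_even n u) (Suc m) \<subseteq> ad_vanishing n m"
proof (induction m)
  case 0
  have "{endo_br D E | D E. D \<in> S_even n u \<and> E \<in> S_even n u} \<subseteq> ad_vanishing n 0"
    using S_even_bracket_const_coeff[OF assms] by blast
  then show ?case
    unfolding derived_series.simps by (rule endo_span_ad_vanishing)
next
  case (Suc m)
  then have "{endo_br D E | D E. D \<in> derived_series (S_even n u) (Suc m)
      \<and> E \<in> derived_series (S_even n u) (Suc m)} \<subseteq> ad_vanishing n (Suc m)"
    using bracket_ad_vanishing by blast
  then show ?case
    unfolding derived_series.simps(2)[of _ "Suc m"] by (rule endo_span_ad_vanishing)
qed

lemma S_even_solvable: "n \<ge> 2 \<Longrightarrow> solvable_lie (S_even n u)"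
  unfolding solvable_lie_def
  using derived_series_S_even_Suc[of "2^n"] ad_vanishing_top[of n]
  by (intro exI[of _ "Suc (2^n)"]) (auto simp: endo_span.zero)

end

end

theorem corollary6p2p2:
  fixes u :: "nat \<Rightarrow> 'a::alg_closed_field" and n :: nat
  assumes "CHAR('a) = 2"
    and "n \<ge> 2"
    and "u \<in> dpO n"
    and "u 0 = 0"
    and "\<forall>k. odd k \<longrightarrow> u k = 0"
  shows "solvable_lie (S_even n u)"
proof -
  have char2: "(2::'a) = 0"
    using of_nat_CHAR[where 'a='a] assms(1) by simp
  have "dp_even u"
    using assms(5) by (simp add: dp_even_def)
  then show ?thesis
    using S_even_solvable[OF char2 _ assms(3,4)] assms(2) by simp
qed

end
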